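(* Let $\tau>0$, $0\le\lambda<1$, $u_n\in\mathcal V_{[0,1]}$ with $M:=\mathcal M(u_n)$ satisfying $0<M<\mathcal M(\mathbf 1)$. Let $A$ be the set of values of $e^{-\tau\Delta}u_n$ and $a_\alpha:=\sum_{i:(e^{-\tau\Delta}u_n)_i=\alpha}d_i^r$ for $\alpha\in A$. If $\nu\in\mathbb R$ solves \[ M = \sum_{\alpha \in A} a_{\alpha} \begin{cases} 1, & \nu \leq \alpha -(1-\lambda),\\ \frac{\alpha-\nu}{1-\lambda}, & \alpha-(1-\lambda)<\nu < \alpha,\\ 0, &\nu\geq \alpha, \end{cases} \] then $\nu \in [\lambda\min A,\lambda\max A]\subseteq(0,\lambda)$.
   Context: $G=(V,E)$ is a finite, simple, connected, undirected graph with weights $\omega_{ij}=\omega_{ji}>0$ for $ij\in E$, $\omega_{ij}=0$ otherwise; $d_i=\sum_j\omega_{ij}$, $r\in[0,1]$ fixed. $\mathcal V$ = functions $V\to\mathbb R$ with $\langle u,v\rangle_{\mathcal V}=\sum_i u_iv_id_i^r$; $\mathcal V_{[0,1]}$ = functions $V\to[0,1]$. $(\Delta u)_i=d_i^{-r}\sum_j\omega_{ij}(u_i-u_j)$, $e^{-\tau\Delta}$ its matrix exponential. $\mathbf 1$ all-ones; $\mathcal M(u)=\langle u,\mathbf 1\rangle_{\mathcal V}$. *)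

theory Defs
  imports "HOL-Analysis.Analysis"
begin

definition weighted_graph :: "('v::finite \<Rightarrow> 'v \<Rightarrow> real) \<Rightarrow> bool" where
  "weighted_graph w \<longleftrightarrow>
     (\<forall>i j. w i j = w j i) \<and> (\<forall>i j. 0 \<le> w i j) \<and> (\<forall>i. w i i = 0) \<and>
     (\<forall>i j. (i, j) \<in> {(a, b). 0 < w a b}\<^sup>*)"

definition degree :: "('v::finite \<Rightarrow> 'v \<Rightarrow> real) \<Rightarrow> 'v \<Rightarrow> real" where
  "degree w i = (\<Sum>j\<in>UNIV. w i j)"

definition dpow :: "('v::finite \<Rightarrow> 'v \<Rightarrow> real) \<Rightarrow> real \<Rightarrow> 'v \<Rightarrow> real" where
  "dpow w r i = degree w i powr r"

definition mass :: "('v::finite \<Rightarrow> 'v \<Rightarrow> real) \<Rightarrow> real \<Rightarrow> ('v \<Rightarrow> real) \<Rightarrow> real" where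
  "mass w r u = (\<Sum>i\<in>UNIV. u i * dpow w r i)"

definition graph_laplacian ::
    "('v::finite \<Rightarrow> 'v \<Rightarrow> real) \<Rightarrow> real \<Rightarrow> ('v \<Rightarrow> real) \<Rightarrow> 'v \<Rightarrow> real" where
  "graph_laplacian w r u i = degree w i powr (-r) * (\<Sum>j\<in>UNIV. w i j * (u i - u j))"

text \<open>Matrix exponential e^{-tau Delta} applied to u, via its power series
  \<open>\<Sum>k. (-tau)^k / k! * Delta^k u\<close>, evaluated componentwise.\<close>
definition heat_op ::
    "('v::finite \<Rightarrow> 'v \<Rightarrow> real) \<Rightarrow> real \<Rightarrow> real \<Rightarrow> ('v \<Rightarrow> real) \<Rightarrow> 'v \<Rightarrow> real" where
  "heat_op w r \<tau> u i = (\<Sum>k. ((-\<tau>) ^ k / fact k) * ((graph_laplacian w r ^^ k) u) i)"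

definition clip_fun :: "real \<Rightarrow> real \<Rightarrow> real \<Rightarrow> real" where
  "clip_fun lam \<alpha> \<nu> =
     (if \<nu> \<le> \<alpha> - (1 - lam) then 1
      else if \<nu> < \<alpha> then (\<alpha> - \<nu>) / (1 - lam) else 0)"

end

theory Submission
  imports Defs
begin

(*
  For a constant c >= max_i d_i^(1-r), the operator P = c I - Delta has nonnegative entries and
  commutes with Delta, so e^(-tau Delta) = e^(-tau c) e^(tau P). Along every edge P spreads
  positive mass, so on a connected graph e^(-tau Delta) maps a nonnegative nonzero u to a strictly
  positive function; applied to u and to 1 - u (using e^(-tau Delta) 1 = 1) this puts every value
  alpha of e^(-tau Delta) u into (0,1). Since Delta is self-adjoint with Delta 1 = 0, the heat flow
  preserves the mass, so the equation for nu says sum a_alpha clip(alpha, nu) = sum a_alpha alpha.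
  For alpha in (0,1), clip(alpha, nu) exceeds alpha when nu < lambda alpha and falls below alpha
  when nu > lambda alpha; hence nu is neither below lambda min A nor above lambda max A.
*)

lemma exp_mult_series_sums:
  fixes y :: "nat \<Rightarrow> real" and t a :: real
  assumes "summable (\<lambda>k. norm (t^k / fact k * y k))"
  shows "(\<lambda>n. t^n / fact n * (\<Sum>k\<le>n. real (n choose k) * a^(n-k) * y k))
           sums (exp (t * a) * (\<Sum>k. t^k / fact k * y k))"
proof -
  have exp_sums: "(\<lambda>m. (t * a)^m / fact m) sums exp (t * a)"
    using exp_converges[of "t * a"] by (simp add: divide_inverse mult.commute)
  have "summable (\<lambda>m. norm ((t * a)^m / fact m))"
    using summable_norm_exp[of "t * a"] by (simp add: divide_inverse mult.commute)
  from Cauchy_product_sums[OF assms this]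
  have "(\<lambda>n. \<Sum>k\<le>n. t^k / fact k * y k * ((t * a)^(n-k) / fact (n-k)))
          sums ((\<Sum>k. t^k / fact k * y k) * exp (t * a))"
    using sums_unique[OF exp_sums] by simp
  moreover have "t^k / fact k * y k * ((t * a)^(n-k) / fact (n-k))
                   = t^n / fact n * (real (n choose k) * a^(n-k) * y k)" if "k \<le> n" for n k
  proof -
    have "t^n = t^k * t^(n-k)" using that by (simp flip: power_add)
    then show ?thesis
      using that by (simp add: binomial_fact field_simps)
  qed
  then have "(\<lambda>n. \<Sum>k\<le>n. t^k / fact k * y k * ((t * a)^(n-k) / fact (n-k)))
             = (\<lambda>n. t^n / fact n * (\<Sum>k\<le>n. real (n choose k) * a^(n-k) * y k))"
    by (auto simp: sum_distrib_left intro!: sum.cong)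
  ultimately show ?thesis
    by (simp add: mult.commute)
qed

lemma pascal_sum_step:
  fixes y :: "nat \<Rightarrow> real" and c :: real
  shows "c * (\<Sum>k\<le>n. real (n choose k) * c^(n-k) * (-1)^k * y k)
         - (\<Sum>k\<le>n. real (n choose k) * c^(n-k) * (-1)^k * y (Suc k))
       = (\<Sum>k\<le>Suc n. real (Suc n choose k) * c^(Suc n-k) * (-1)^k * y k)"
proof -
  have "c * (\<Sum>k\<le>n. real (n choose k) * c^(n-k) * (-1)^k * y k)
      = (\<Sum>k\<le>Suc n. real (n choose k) * c^(Suc n-k) * (-1)^k * y k)"
    by (simp add: sum_distrib_left Suc_diff_le mult_ac)
  also have "\<dots> = c^Suc n * y 0
      + (\<Sum>k\<le>n. real (n choose Suc k) * c^(n-k) * (-1)^Suc k * y (Suc k))"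
    by (subst sum.atMost_Suc_shift) simp
  finally show ?thesis
    by (subst sum.atMost_Suc_shift)
       (simp add: ring_distribs sum.distrib sum_subtractf sum_negf)
qed

lemma funpow_binomial_expansion:
  fixes P L :: "('a \<Rightarrow> real) \<Rightarrow> 'a \<Rightarrow> real"
  assumes P_linear: "\<And>(K :: nat set) a h. P (\<lambda>i. \<Sum>k\<in>K. a k * h k i) = (\<lambda>i. \<Sum>k\<in>K. a k * P (h k) i)"
    and L_eq: "\<And>f i. L f i = c * f i - P f i"
  shows "(L ^^ n) f i = (\<Sum>k\<le>n. real (n choose k) * c^(n-k) * (-1)^k * (P ^^ k) f i)"
proof (induction n arbitrary: i)
  case 0
  then show ?case by simp
next
  case (Suc n)
  then have "(L ^^ n) f = (\<lambda>i. \<Sum>k\<le>n. (real (n choose k) * c^(n-k) * (-1)^k) * (P ^^ k) f i)"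
    by (simp add: fun_eq_iff)
  then have "(L ^^ Suc n) f i = c * (\<Sum>k\<le>n. real (n choose k) * c^(n-k) * (-1)^k * (P ^^ k) f i)
      - (\<Sum>k\<le>n. real (n choose k) * c^(n-k) * (-1)^k * (P ^^ Suc k) f i)"
    using P_linear[of "\<lambda>k. real (n choose k) * c^(n-k) * (-1)^k" "\<lambda>k. (P ^^ k) f" "{..n}"]
    by (simp add: L_eq)
  then show ?case
    using pascal_sum_step[where y = "\<lambda>k. (P ^^ k) f i"] by simp
qed

definition shifted_laplacian ::
    "('v::finite \<Rightarrow> 'v \<Rightarrow> real) \<Rightarrow> real \<Rightarrow> real \<Rightarrow> ('v \<Rightarrow> real) \<Rightarrow> 'v \<Rightarrow> real" where
  "shifted_laplacian w r c f i = c * f i - graph_laplacian w r f i"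

lemma graph_laplacian_sum:
  "graph_laplacian w r (\<lambda>i. \<Sum>k\<in>K. a k * h k i) i = (\<Sum>k\<in>K. a k * graph_laplacian w r (h k) i)"
proof -
  have "(\<Sum>j\<in>UNIV. w i j * ((\<Sum>k\<in>K. a k * h k i) - (\<Sum>k\<in>K. a k * h k j)))
      = (\<Sum>k\<in>K. a k * (\<Sum>j\<in>UNIV. w i j * (h k i - h k j)))"
    by (simp add: sum_distrib_left sum_subtractf[symmetric] algebra_simps sum.swap[of _ UNIV K])
  then show ?thesis
    by (simp add: graph_laplacian_def sum_distrib_left mult_ac)
qed

lemma shifted_laplacian_sum:
  "shifted_laplacian w r c (\<lambda>i. \<Sum>k\<in>K. a k * h k i)
     = (\<lambda>i. \<Sum>k\<in>K. a k * shifted_laplacian w r c (h k) i)"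
  by (simp add: fun_eq_iff shifted_laplacian_def graph_laplacian_sum sum_distrib_left
      sum_subtractf algebra_simps)

lemma funpow_graph_laplacian_eq:
  "(graph_laplacian w r ^^ n) f i
     = (\<Sum>k\<le>n. real (n choose k) * c^(n-k) * (-1)^k * (shifted_laplacian w r c ^^ k) f i)"
  by (rule funpow_binomial_expansion) (simp_all add: shifted_laplacian_sum shifted_laplacian_def)

lemma shifted_laplacian_eq:
  "shifted_laplacian w r c f i = (c - degree w i powr (-r) * degree w i) * f i
     + degree w i powr (-r) * (\<Sum>j\<in>UNIV. w i j * f j)"
  unfolding shifted_laplacian_def graph_laplacian_def degree_def
  by (simp add: sum_subtractf sum_distrib_right sum_distrib_left algebra_simps)

lemma shifted_laplacian_const: "shifted_laplacian w r c (\<lambda>_. a) i = c * a"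
  by (simp add: shifted_laplacian_def graph_laplacian_def)

lemma shifted_laplacian_const_minus:
  "shifted_laplacian w r c (\<lambda>i. a - g i) i = c * a - shifted_laplacian w r c g i"
  by (simp add: shifted_laplacian_def graph_laplacian_def algebra_simps sum_subtractf)

lemma funpow_shifted_laplacian_const_minus:
  "(shifted_laplacian w r c ^^ k) (\<lambda>i. a - g i) i = c^k * a - (shifted_laplacian w r c ^^ k) g i"
proof (induction k arbitrary: i)
  case (Suc k)
  then have "(shifted_laplacian w r c ^^ k) (\<lambda>i. a - g i)
      = (\<lambda>i. c^k * a - (shifted_laplacian w r c ^^ k) g i)"
    by auto
  then show ?case by (simp add: shifted_laplacian_const_minus mult.assoc)
qed simp

lemma weight_le_degree: "\<forall>i j. 0 \<le> w i j \<Longrightarrow> w i j \<le> degree w i"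
  unfolding degree_def by (rule member_le_sum[where f = "w i"]) auto

lemma mass_graph_laplacian:
  assumes nonneg: "\<forall>i j. 0 \<le> w i j" and symm: "\<forall>i j. w i j = w j i"
  shows "mass w r (graph_laplacian w r f) = 0"
proof -
  have "graph_laplacian w r f i * dpow w r i = (\<Sum>j\<in>UNIV. w i j * (f i - f j))" for i
  proof (cases "degree w i = 0")
    case True
    \<comment> \<open>here \<open>dpow w r i * degree w i powr (-r) = 0\<close>, but the row of weights vanishes too\<close>
    then have "w i j = 0" for j
      using weight_le_degree[OF nonneg, of i j] nonneg by (simp add: order_antisym)
    then show ?thesis by (simp add: graph_laplacian_def)
  next
    case False
    then have "degree w i powr (-r) * dpow w r i = 1"
      using degree_def nonneg by (simp add: dpow_def sum_nonneg flip: powr_add)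
    then show ?thesis by (simp add: graph_laplacian_def mult.commute mult.left_commute)
  qed
  then have "mass w r (graph_laplacian w r f)
      = (\<Sum>i\<in>UNIV. \<Sum>j\<in>UNIV. w i j * f i) - (\<Sum>i\<in>UNIV. \<Sum>j\<in>UNIV. w i j * f j)"
    by (simp add: mass_def sum_subtractf right_diff_distrib)
  also have "(\<Sum>i\<in>UNIV. \<Sum>j\<in>UNIV. w i j * f j) = (\<Sum>i\<in>UNIV. \<Sum>j\<in>UNIV. w i j * f i)"
    by (subst sum.swap) (simp add: symm)
  finally show ?thesis by simp
qed

context
  fixes w :: "'v::finite \<Rightarrow> 'v \<Rightarrow> real" and r c :: real
  assumes nonneg: "\<forall>i j. 0 \<le> w i j"
    and shift_bound: "\<forall>i. degree w i powr (-r) * degree w i \<le> c"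
begin

lemma shifted_laplacian_mono:
  assumes "\<And>j. f j \<le> g j"
  shows "shifted_laplacian w r c f i \<le> shifted_laplacian w r c g i"
proof -
  have "(c - degree w i powr (-r) * degree w i) * f i
      \<le> (c - degree w i powr (-r) * degree w i) * g i"
    using shift_bound assms by (simp add: mult_left_mono)
  moreover have "degree w i powr (-r) * (\<Sum>j\<in>UNIV. w i j * f j)
      \<le> degree w i powr (-r) * (\<Sum>j\<in>UNIV. w i j * g j)"
    using nonneg assms by (intro mult_left_mono sum_mono mult_left_mono) auto
  ultimately show ?thesis
    unfolding shifted_laplacian_eq by linarith
qed

lemma shifted_laplacian_ge_edge:
  assumes "\<And>j. 0 \<le> f j"
  shows "degree w i powr (-r) * w i j * f j \<le> shifted_laplacian w r c f i"
proof -
  have "w i j * f j \<le> (\<Sum>j\<in>UNIV. w i j * f j)"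
    using nonneg assms by (intro member_le_sum[where f = "\<lambda>j. w i j * f j"]) auto
  then have "degree w i powr (-r) * w i j * f j \<le> degree w i powr (-r) * (\<Sum>j\<in>UNIV. w i j * f j)"
    by (simp add: mult_left_mono mult.assoc)
  moreover have "0 \<le> (c - degree w i powr (-r) * degree w i) * f i"
    using shift_bound assms by simp
  ultimately show ?thesis
    unfolding shifted_laplacian_eq by linarith
qed

lemma funpow_shifted_laplacian_nonneg:
  "(\<And>j. 0 \<le> f j) \<Longrightarrow> 0 \<le> (shifted_laplacian w r c ^^ k) f i"
proof (induction k arbitrary: i)
  case (Suc k)
  then show ?case
    using shifted_laplacian_mono[of "\<lambda>_. 0" "(shifted_laplacian w r c ^^ k) f" i]
    by (simp add: shifted_laplacian_const)
qed simp

lemma abs_funpow_shifted_laplacian_le: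
  "(\<And>j. \<bar>f j\<bar> \<le> b) \<Longrightarrow> \<bar>(shifted_laplacian w r c ^^ k) f i\<bar> \<le> c^k * b"
proof (induction k arbitrary: i)
  case (Suc k)
  let ?g = "(shifted_laplacian w r c ^^ k) f"
  have "\<bar>?g j\<bar> \<le> c^k * b" for j
    using Suc by blast
  then have "- (c^k * b) \<le> ?g j" "?g j \<le> c^k * b" for j
    by (meson abs_le_D1 abs_le_D2 minus_le_iff)+
  then have "shifted_laplacian w r c (\<lambda>_. - (c^k * b)) i \<le> shifted_laplacian w r c ?g i"
    and "shifted_laplacian w r c ?g i \<le> shifted_laplacian w r c (\<lambda>_. c^k * b) i"
    by (auto intro!: shifted_laplacian_mono)
  then show ?case
    by (simp add: shifted_laplacian_const abs_le_iff mult.assoc)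
qed simp

lemma shifted_heat_series_summable:
  "summable (\<lambda>k. norm (t^k / fact k * (shifted_laplacian w r c ^^ k) f i))"
proof (rule summable_comparison_test')
  define b where "b = Max (range (\<lambda>j. \<bar>f j\<bar>))"
  have "\<bar>f j\<bar> \<le> b" for j
    unfolding b_def by (rule Max_ge) auto
  then have bound: "\<bar>(shifted_laplacian w r c ^^ k) f i\<bar> \<le> c^k * b" for k
    by (rule abs_funpow_shifted_laplacian_le)
  show "norm (norm (t^k / fact k * (shifted_laplacian w r c ^^ k) f i))
               \<le> inverse (fact k) * (\<bar>t\<bar> * c)^k * b" for k
  proof -
    have "norm (norm (t^k / fact k * (shifted_laplacian w r c ^^ k) f i))
        = \<bar>t\<bar>^k / fact k * \<bar>(shifted_laplacian w r c ^^ k) f i\<bar>"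
      by (simp add: abs_mult power_abs)
    also have "\<dots> \<le> \<bar>t\<bar>^k / fact k * (c^k * b)"
      using bound by (intro mult_left_mono) auto
    finally show ?thesis
      by (simp add: power_mult_distrib divide_inverse mult_ac)
  qed
  show "summable (\<lambda>k. inverse (fact k) * (\<bar>t\<bar> * c)^k * b)"
    by (intro summable_mult2 summable_exp)
qed

lemma heat_series_sums_shifted:
  "(\<lambda>k. (-t)^k / fact k * (graph_laplacian w r ^^ k) f i)
     sums (exp (-(t * c)) * (\<Sum>k. t^k / fact k * (shifted_laplacian w r c ^^ k) f i))"
proof -
  define y where "y k = (-1)^k * (shifted_laplacian w r c ^^ k) f i" for k
  have sign: "(-t)^k / fact k * y k = t^k / fact k * (shifted_laplacian w r c ^^ k) f i" for k
    by (simp add: y_def flip: power_mult_distrib)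
  have "(\<lambda>n. (-t)^n / fact n * (\<Sum>k\<le>n. real (n choose k) * c^(n-k) * y k))
          sums (exp (-t * c) * (\<Sum>k. (-t)^k / fact k * y k))"
    by (rule exp_mult_series_sums) (use shifted_heat_series_summable[of t f i] in \<open>simp only: sign\<close>)
  then show ?thesis
    unfolding sign by (simp add: y_def funpow_graph_laplacian_eq[where c = c] mult.assoc)
qed

lemma heat_op_sums:
  "(\<lambda>k. (-t)^k / fact k * (graph_laplacian w r ^^ k) f i) sums heat_op w r t f i"
  unfolding heat_op_def using heat_series_sums_shifted by (simp add: sums_iff)

lemma heat_op_eq_shifted_series:
  "heat_op w r t f i = exp (-(t * c)) * (\<Sum>k. t^k / fact k * (shifted_laplacian w r c ^^ k) f i)"
  using sums_unique2[OF heat_op_sums heat_series_sums_shifted] .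

lemma exists_funpow_shifted_laplacian_pos:
  assumes "(i, j) \<in> {(a, b). 0 < w a b}\<^sup>*" and "\<And>j. 0 \<le> f j" and "0 < f j"
  shows "\<exists>k. 0 < (shifted_laplacian w r c ^^ k) f i"
  using assms(1)
proof (induction rule: converse_rtrancl_induct)
  case base
  then show ?case
    using assms(3) by (metis funpow_0)
next
  case (step y z)
  then obtain k where k: "0 < (shifted_laplacian w r c ^^ k) f z" by blast
  have "0 < w y z" using step by simp
  moreover have "w y z \<le> degree w y"
    using nonneg by (rule weight_le_degree)
  ultimately have "0 < degree w y powr (-r) * w y z * (shifted_laplacian w r c ^^ k) f z"
    using k by simp
  also have "\<dots> \<le> (shifted_laplacian w r c ^^ Suc k) f y"
    using shifted_laplacian_ge_edge funpow_shifted_laplacian_nonneg assms(2) by simp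
  finally show ?case by blast
qed

lemma heat_op_pos:
  assumes "(i, j) \<in> {(a, b). 0 < w a b}\<^sup>*" and "\<And>j. 0 \<le> f j" and "0 < f j" and "0 < t"
  shows "0 < heat_op w r t f i"
proof -
  obtain k where "0 < (shifted_laplacian w r c ^^ k) f i"
    using exists_funpow_shifted_laplacian_pos assms(1-3) by blast
  then have "0 < (\<Sum>k. t^k / fact k * (shifted_laplacian w r c ^^ k) f i)"
    using assms(2,4) summable_norm_cancel[OF shifted_heat_series_summable]
      funpow_shifted_laplacian_nonneg
    by (intro suminf_pos2[where i = k]) auto
  then show ?thesis
    by (simp add: heat_op_eq_shifted_series)
qed

lemma heat_op_const_minus: "heat_op w r t (\<lambda>i. a - f i) i = a - heat_op w r t f i"
proof -
  have "(\<lambda>k. t^k / fact k * (c^k * a)) sums (exp (t * c) * a)"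
    using sums_mult2[OF exp_converges[of "t * c"], of a]
    by (simp add: divide_inverse power_mult_distrib mult_ac)
  then have "(\<lambda>k. t^k / fact k * (shifted_laplacian w r c ^^ k) (\<lambda>i. a - f i) i)
      sums (exp (t * c) * a - (\<Sum>k. t^k / fact k * (shifted_laplacian w r c ^^ k) f i))"
    unfolding funpow_shifted_laplacian_const_minus right_diff_distrib
    using summable_norm_cancel[OF shifted_heat_series_summable]
    by (intro sums_diff summable_sums) auto
  then show ?thesis
    by (simp add: heat_op_eq_shifted_series sums_iff right_diff_distrib exp_minus_inverse exp_minus)
qed

lemma heat_op_mass:
  assumes symm: "\<forall>i j. w i j = w j i"
  shows "mass w r (heat_op w r t f) = mass w r f"
proof -
  have "mass w r ((graph_laplacian w r ^^ k) f) = (if k = 0 then mass w r f else 0)" for k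
    using mass_graph_laplacian[OF nonneg symm] by (cases k) simp_all
  moreover have "(\<Sum>i\<in>UNIV. (-t)^k / fact k * (graph_laplacian w r ^^ k) f i * dpow w r i)
      = (-t)^k / fact k * mass w r ((graph_laplacian w r ^^ k) f)" for k
    by (simp add: mass_def sum_distrib_left mult.assoc)
  ultimately have "(\<lambda>k. \<Sum>i\<in>UNIV. (-t)^k / fact k * (graph_laplacian w r ^^ k) f i * dpow w r i)
      = (\<lambda>k. if k = 0 then mass w r f else 0)"
    by auto
  moreover have "(\<lambda>k. \<Sum>i\<in>UNIV. (-t)^k / fact k * (graph_laplacian w r ^^ k) f i * dpow w r i)
      sums mass w r (heat_op w r t f)"
    unfolding mass_def by (intro sums_sum sums_mult2 heat_op_sums)
  ultimately show ?thesis
    using sums_single[of 0 "\<lambda>_. mass w r f"] sums_unique2 by fastforce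
qed

end

lemma shift_bound_exists:
  fixes w :: "'v::finite \<Rightarrow> 'v \<Rightarrow> real"
  shows "\<exists>c. \<forall>i. degree w i powr (-r) * degree w i \<le> c"
  by (intro exI[of _ "Max (range (\<lambda>i. degree w i powr (-r) * degree w i))"]) simp

lemma clip_fun_gt:
  assumes "0 \<le> \<alpha>" "\<alpha> < 1" "0 \<le> lam" "lam < 1" "\<nu> < lam * \<alpha>"
  shows "\<alpha> < clip_fun lam \<alpha> \<nu>"
proof -
  have "lam * \<alpha> \<le> \<alpha>"
    using assms by (intro mult_left_le_one_le) auto
  moreover have "\<alpha> < (\<alpha> - \<nu>) / (1 - lam)"
    using assms by (simp add: pos_less_divide_eq algebra_simps)
  ultimately show ?thesis
    using assms unfolding clip_fun_def by auto
qed

lemma clip_fun_lt: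
  assumes "0 < \<alpha>" "\<alpha> \<le> 1" "0 \<le> lam" "lam < 1" "lam * \<alpha> < \<nu>"
  shows "clip_fun lam \<alpha> \<nu> < \<alpha>"
proof -
  have "(1 - lam) * (\<alpha> - 1) \<le> 0"
    using assms by (intro mult_nonneg_nonpos) auto
  then have "\<not> \<nu> \<le> \<alpha> - (1 - lam)"
    using assms by (simp add: algebra_simps)
  moreover have "(\<alpha> - \<nu>) / (1 - lam) < \<alpha>"
    using assms by (simp add: pos_divide_less_eq algebra_simps)
  ultimately show ?thesis
    using assms unfolding clip_fun_def by auto
qed

lemma clip_fun_balance_bounds:
  fixes a x :: "'i::finite \<Rightarrow> real"
  assumes "\<forall>i. 0 \<le> a i" and "0 < a j" and "\<forall>i. 0 < x i \<and> x i < 1"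
    and "0 \<le> lam" "lam < 1"
    and balance: "(\<Sum>i\<in>UNIV. a i * clip_fun lam (x i) \<nu>) = (\<Sum>i\<in>UNIV. a i * x i)"
  shows "lam * Min (range x) \<le> \<nu> \<and> \<nu> \<le> lam * Max (range x)"
proof (intro conjI; rule ccontr)
  assume "\<not> lam * Min (range x) \<le> \<nu>"
  then have "\<nu> < lam * x i" for i
    using \<open>0 \<le> lam\<close> mult_left_mono[of "Min (range x)" "x i" lam] by auto
  then have "x i < clip_fun lam (x i) \<nu>" for i
    using assms(3-5) clip_fun_gt by (simp add: less_imp_le)
  then have "(\<Sum>i\<in>UNIV. a i * x i) < (\<Sum>i\<in>UNIV. a i * clip_fun lam (x i) \<nu>)"
    using assms(1,2)
    by (intro sum_strict_mono_ex1) (auto intro: mult_left_mono mult_strict_left_mono less_imp_le)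
  then show False
    using balance by simp
next
  assume "\<not> \<nu> \<le> lam * Max (range x)"
  then have "lam * x i < \<nu>" for i
    using \<open>0 \<le> lam\<close> mult_left_mono[of "x i" "Max (range x)" lam] by auto
  then have "clip_fun lam (x i) \<nu> < x i" for i
    using assms(3-5) clip_fun_lt by (simp add: less_imp_le)
  then have "(\<Sum>i\<in>UNIV. a i * clip_fun lam (x i) \<nu>) < (\<Sum>i\<in>UNIV. a i * x i)"
    using assms(1,2)
    by (intro sum_strict_mono_ex1) (auto intro: mult_left_mono mult_strict_left_mono less_imp_le)
  then show False
    using balance by simp
qed

lemma sum_range_fibres:
  fixes v :: "'i::finite \<Rightarrow> 'b" and a :: "'i \<Rightarrow> 'a::semiring_0"
  shows "(\<Sum>\<alpha>\<in>range v. (\<Sum>i\<in>{i. v i = \<alpha>}. a i) * g \<alpha>) = (\<Sum>i\<in>UNIV. a i * g (v i))"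
proof -
  have "(\<Sum>i\<in>UNIV. a i * g (v i)) = (\<Sum>\<alpha>\<in>range v. \<Sum>i\<in>{i\<in>UNIV. v i = \<alpha>}. a i * g (v i))"
    by (rule sum.image_gen) simp
  then show ?thesis
    unfolding sum_distrib_right by (auto intro!: sum.cong)
qed

lemma weighted_graph_heat_op_mass:
  assumes "weighted_graph w"
  shows "mass w r (heat_op w r t f) = mass w r f"
proof -
  obtain c where "\<forall>i. degree w i powr (-r) * degree w i \<le> c"
    using shift_bound_exists by blast
  then show ?thesis
    using heat_op_mass assms unfolding weighted_graph_def by blast
qed

lemma heat_op_strictly_between_0_1:
  assumes "weighted_graph w" and "0 < t" and "\<forall>i. 0 \<le> u i \<and> u i \<le> 1"
    and "0 < u j0" and "u j1 < 1"
  shows "0 < heat_op w r t u i \<and> heat_op w r t u i < 1"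
proof -
  have nonneg: "\<forall>i j. 0 \<le> w i j" and conn: "\<And>i j. (i, j) \<in> {(a, b). 0 < w a b}\<^sup>*"
    using assms(1) unfolding weighted_graph_def by auto
  obtain c where shift: "\<forall>i. degree w i powr (-r) * degree w i \<le> c"
    using shift_bound_exists by blast
  have "0 < heat_op w r t (\<lambda>i. 1 - u i) i"
    using heat_op_pos[OF nonneg shift conn, of "\<lambda>i. 1 - u i" j1] assms(2,3,5) by simp
  then show ?thesis
    using heat_op_pos[OF nonneg shift conn] heat_op_const_minus[OF nonneg shift] assms(2-4)
    by auto
qed

lemma exists_vertex_pos_mass:
  assumes "\<forall>i. 0 \<le> u i" and "0 < mass w r u"
  obtains j where "0 < u j" and "0 < dpow w r j"
proof -
  obtain j where "0 < u j * dpow w r j"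
    using assms(2) sum_nonpos[of UNIV "\<lambda>i. u i * dpow w r i"] unfolding mass_def
    by (meson not_le)
  moreover have "0 \<le> dpow w r j"
    by (simp add: dpow_def)
  ultimately have "0 < u j" "0 < dpow w r j"
    using assms(1) by (auto simp: zero_less_mult_iff)
  then show ?thesis
    by (rule that)
qed

lemma exists_value_lt_one:
  assumes "mass w r u < mass w r (\<lambda>_. 1)"
  obtains j where "u j < 1"
proof -
  have "\<exists>j. u j < 1"
  proof (rule ccontr)
    assume "\<nexists>j. u j < 1"
    then have "mass w r (\<lambda>_. 1) \<le> mass w r u"
      unfolding mass_def by (intro sum_mono mult_right_mono) (auto simp: dpow_def not_less)
    then show False
      using assms by simp
  qed
  then show ?thesis
    using that by blast
qed

theorem proposition28:
  fixes w :: "'v::finite \<Rightarrow> 'v \<Rightarrow> real"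
    and r \<tau> lam \<nu> :: real and u :: "'v \<Rightarrow> real"
  assumes "weighted_graph w"
    and "0 \<le> r" "r \<le> 1"
    and "0 < \<tau>"
    and "0 \<le> lam" "lam < 1"
    and "\<forall>i. 0 \<le> u i \<and> u i \<le> 1"
    and "0 < mass w r u" "mass w r u < mass w r (%_. 1)"
    and "mass w r u =
           (\<Sum>\<alpha>\<in>range (heat_op w r \<tau> u).
              (\<Sum>i\<in>{i. heat_op w r \<tau> u i = \<alpha>}. dpow w r i) * clip_fun lam \<alpha> \<nu>)"
  shows "lam * Min (range (heat_op w r \<tau> u)) \<le> \<nu> \<and> \<nu> \<le> lam * Max (range (heat_op w r \<tau> u))
         \<and> (0 < lam \<longrightarrow> {lam * Min (range (heat_op w r \<tau> u)) .. lam * Max (range (heat_op w r \<tau> u))}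
                         \<subseteq> {0 <..< lam})"
proof -
  obtain j0 where u_j0: "0 < u j0" and dpow_j0: "0 < dpow w r j0"
    using exists_vertex_pos_mass assms(7,8) by blast
  obtain j1 where u_j1: "u j1 < 1"
    using exists_value_lt_one assms(9) by blast
  define v where "v = heat_op w r \<tau> u"
  have v_bounds: "\<forall>i. 0 < v i \<and> v i < 1"
    unfolding v_def using heat_op_strictly_between_0_1 assms(1,4,7) u_j0 u_j1 by blast
  have "(\<Sum>i\<in>UNIV. dpow w r i * clip_fun lam (v i) \<nu>) = (\<Sum>i\<in>UNIV. dpow w r i * v i)"
    using assms(10) weighted_graph_heat_op_mass[OF assms(1), of r \<tau> u]
    unfolding v_def sum_range_fibres by (simp add: mass_def mult.commute)
  then have "lam * Min (range v) \<le> \<nu> \<and> \<nu> \<le> lam * Max (range v)"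
    using clip_fun_balance_bounds[of "dpow w r"] dpow_j0 v_bounds assms(5,6)
    by (simp add: dpow_def)
  moreover have "{lam * Min (range v) .. lam * Max (range v)} \<subseteq> {0 <..< lam}" if "0 < lam"
  proof -
    have "0 < lam * Min (range v)" "lam * Max (range v) < lam"
      using that v_bounds by (simp_all add: zero_less_mult_iff mult_less_cancel_left1)
    then show ?thesis by auto
  qed
  ultimately show ?thesis
    unfolding v_def by blast
qed

end
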